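(* Let $(X_1,\dots,X_M)$ have density $f(x_1,\dots,x_M)=\sum_{\mathbf i\in\mathscr S}p_{\mathbf i}f_{i_1}(x_1)\cdots f_{i_M}(x_M)$ belonging to $\mathrm{MMEam}$. Fix $1\le k\le M$ and $x_{k+1},\dots,x_M\ge0$ (at which the conditional density below is defined). Then the conditional density $$f^{\mathrm{con}}(x_1,\dots,x_k\mid x_{k+1},\dots,x_M)=\frac{f(x_1,\dots,x_M)}{\int_0^\infty\cdots\int_0^\infty f(y_1,\dots,y_k,x_{k+1},\dots,x_M)\,dy_1\cdots dy_k},\quad x_1,\dots,x_k\ge0,$$ is a $k$-variate $\mathrm{MMEam}$ density given by $$f^{\mathrm{con}}(x_1,\dots,x_k\mid x_{k+1},\dots,x_M)=\sum_{\mathbf i\in\mathscr S}q_{\mathbf i}(x_{k+1},\dots,x_M)f_{i_1}(x_1)\cdots f_{i_k}(x_k),$$ where $q_{\mathbf i}(x_{k+1},\dots,x_M)=\dfrac{p_{\mathbf i}f_{i_{k+1}}(x_{k+1})\cdots f_{i_M}(x_M)}{\sum_{\mathbf h\in\mathscr S}p_{\mathbf h}f_{h_{k+1}}(x_{k+1})\cdots f_{h_M}(x_M)}$ if $k<M$ and $q_{\mathbf i}=p_{\mathbf i}$ if $k=M$. Moreover, for $r_1,\dots,r_k\in\mathbb{N}_0$, $$\mathbb{E}\Big[\prod_{j=1}^k X_j^{r_j}\,\Big|\,X_{k+1}=x_{k+1},\dots,X_M=x_M\Big]=\sum_{\mathbf i\in\mathscr S}q_{\mathbf i}(x_{k+1},\dots,x_M)\prod_{j=1}^k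 r_j!\,\alpha_{i_j}(-T_{i_j})^{-(r_j+1)}t_{i_j}.$$
   Context: An ME density is a probability density on $[0,\infty)$ of the form $g(x)=\alpha e^{Tx}t$ ($\alpha$ real row vector, $T$ real square matrix, $t$ real column vector); triples are taken with all eigenvalues of $T$ having strictly negative real part, so $T$ is invertible. MMEam: fix $L,M\in\mathbb N_+$ and ME densities $f_1,\dots,f_L$ with triples $(\alpha_j,T_j,t_j)$. Let $\mathscr S=\{1,\dots,L\}^M$ with elements $\mathbf i=(i_1,\dots,i_M)$, and let $\{p_{\mathbf i}\}$ be real numbers (possibly negative) with $\sum_{\mathbf i}p_{\mathbf i}=1$. The function $f(x_1,\dots,x_M)=\sum_{\mathbf i\in\mathscr S}p_{\mathbf i}f_{i_1}(x_1)\cdots f_{i_M}(x_M)$ on $[0,\infty)^M$ is an MMEam density if $f\ge0$; $\mathrm{MMEam}$ denotes the class of such densities (for any dimension, with mixing weights indexed by $\{1,\dots,L\}^{\text{dimension}}$). *)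

theory Defs
  imports "HOL-Probability.Probability"
          "Jordan_Normal_Form.Char_Poly"
          "Jordan_Normal_Form.Gauss_Jordan_Elimination"
begin

definition mat_exp :: "real mat \<Rightarrow> real mat" where
  "mat_exp A = mat (dim_row A) (dim_col A) (\<lambda>(i,j). \<Sum>n. (A ^\<^sub>m n) $$ (i,j) / fact n)"

definition ME_fun :: "real vec \<Rightarrow> real mat \<Rightarrow> real vec \<Rightarrow> real \<Rightarrow> real" where
  "ME_fun \<alpha> T t x = \<alpha> \<bullet> (mat_exp (x \<cdot>\<^sub>m T) *\<^sub>v t)"

definition ME_triple :: "real vec \<Rightarrow> real mat \<Rightarrow> real vec \<Rightarrow> bool" where
  "ME_triple \<alpha> T t \<longleftrightarrow>
     (\<exists>n. T \<in> carrier_mat n n \<and> dim_vec \<alpha> = n \<and> dim_vec t = n) \<and>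
     (\<forall>c. eigenvalue (map_mat complex_of_real T) c \<longrightarrow> Re c < 0) \<and>
     (\<forall>x\<ge>0. ME_fun \<alpha> T t x \<ge> 0) \<and>
     set_integrable lborel {0..} (ME_fun \<alpha> T t) \<and>
     (LINT x:{0..}|lborel. ME_fun \<alpha> T t x) = 1"

text \<open>Index set S = {1..L}^d; points are functions nat => nat on {1..d} (extensional).\<close>
definition idx :: "nat \<Rightarrow> nat \<Rightarrow> (nat \<Rightarrow> nat) set" where
  "idx L d = PiE {1..d} (\<lambda>_. {1..L})"

definition orthant :: "nat \<Rightarrow> (nat \<Rightarrow> real) set" where
  "orthant d = PiE {1..d} (\<lambda>_. {0..})"

definition mix :: "nat \<Rightarrow> nat \<Rightarrow> (nat \<Rightarrow> real \<Rightarrow> real) \<Rightarrow> ((nat \<Rightarrow> nat) \<Rightarrow> real)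
                    \<Rightarrow> (nat \<Rightarrow> real) \<Rightarrow> real" where
  "mix L d fs p x = (\<Sum>i\<in>idx L d. p i * (\<Prod>m\<in>{1..d}. fs (i m) (x m)))"

definition MMEam_weights :: "nat \<Rightarrow> nat \<Rightarrow> (nat \<Rightarrow> real \<Rightarrow> real) \<Rightarrow> ((nat \<Rightarrow> nat) \<Rightarrow> real) \<Rightarrow> bool" where
  "MMEam_weights L d fs p \<longleftrightarrow> (\<Sum>i\<in>idx L d. p i) = 1 \<and> (\<forall>x\<in>orthant d. mix L d fs p x \<ge> 0)"

definition is_MMEam :: "nat \<Rightarrow> nat \<Rightarrow> (nat \<Rightarrow> real \<Rightarrow> real) \<Rightarrow> ((nat \<Rightarrow> real) \<Rightarrow> real) \<Rightarrow> bool" where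
  "is_MMEam L d fs g \<longleftrightarrow>
     (\<exists>p. MMEam_weights L d fs p \<and> (\<forall>x\<in>orthant d. g x = mix L d fs p x))"

definition glue :: "nat \<Rightarrow> (nat \<Rightarrow> real) \<Rightarrow> (nat \<Rightarrow> real) \<Rightarrow> nat \<Rightarrow> real" where
  "glue k y x = (\<lambda>m. if m \<le> k then y m else x m)"

definition marg :: "nat \<Rightarrow> ((nat \<Rightarrow> real) \<Rightarrow> real) \<Rightarrow> (nat \<Rightarrow> real) \<Rightarrow> real" where
  "marg k f x = (LINT y:orthant k|PiM {1..k} (\<lambda>_. lborel). f (glue k y x))"

definition fcon :: "nat \<Rightarrow> ((nat \<Rightarrow> real) \<Rightarrow> real) \<Rightarrow> (nat \<Rightarrow> real) \<Rightarrow> (nat \<Rightarrow> real) \<Rightarrow> real" where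
  "fcon k f x y = f (glue k y x) / marg k f x"

end

theory Submission
  imports Defs "Jordan_Normal_Form.Spectral_Radius" "HOL-Real_Asymp.Real_Asymp"
begin

(* Freezing the last M - k coordinates at x turns every product f_{i_1}(y_1) ... f_{i_M}(y_M)
  into the constant p_i f_{i_{k+1}}(x_{k+1}) ... f_{i_M}(x_M) times a product over the first k
  coordinates. Since every f_j integrates to one, the denominator of the conditional density is
  the sum of these constants, so the conditional density is again a mixture of products, with the
  weights q_i; grouping the q_i by the restriction of i to {1..k} gives k-variate MMEam weights.
  Its moments factor into one-dimensional moments of alpha e^{Tx} t, which integration by parts
  reduces to r! alpha (-T)^{-(r+1)} t. The boundary terms vanish because e^{Tx} decays
  exponentially: for small h > 0 all eigenvalues of I + hT lie in a disc of radius rho < 1, so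
  e^{xT} = e^{-x/h} e^{(x/h)(I + hT)} is bounded entrywise by a multiple of e^{-(1 - rho) x / h}. *)



section \<open>Matrix exponential\<close>

lemma index_mult_mat_sum:
  assumes "A \<in> carrier_mat n m" "B \<in> carrier_mat m p" "i < n" "j < p"
  shows "(A * B) $$ (i,j) = (\<Sum>l<m. A $$ (i,l) * B $$ (l,j))"
  using assms by (simp add: scalar_prod_def lessThan_atLeast0)

lemma index_mult_mat_vec_sum:
  assumes "A \<in> carrier_mat n m" "v \<in> carrier_vec m" "i < n"
  shows "(A *\<^sub>v v) $ i = (\<Sum>l<m. A $$ (i,l) * v $ l)"
  using assms by (simp add: scalar_prod_def lessThan_atLeast0)

lemma pow_smult_mat:
  assumes "(A :: 'a :: comm_ring_1 mat) \<in> carrier_mat n n"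
  shows "(c \<cdot>\<^sub>m A) ^\<^sub>m k = c ^ k \<cdot>\<^sub>m A ^\<^sub>m k"
proof (induction k)
  case 0
  then show ?case using assms by (auto simp: mat_eq_iff)
next
  case (Suc k)
  then show ?case
    using assms
    by (simp add: mult_smult_assoc_mat[of _ n n _ n] mult_smult_distrib[of _ n n _ n])
       (auto simp: mat_eq_iff)
qed

lemma mult_pow_mat_commute:
  assumes "A \<in> carrier_mat n n"
  shows "A * A ^\<^sub>m k = A ^\<^sub>m k * A"
proof (induction k)
  case (Suc k)
  have "A * A ^\<^sub>m Suc k = (A * A ^\<^sub>m k) * A"
    using assms by (simp add: assoc_mult_mat[of _ n n _ n _ n])
  then show ?case using Suc by simp
qed (use assms in simp)

lemma pow_mat_entry_bound:
  fixes A :: "real mat"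
  assumes A: "A \<in> carrier_mat n n"
  shows "i < n \<Longrightarrow> j < n \<Longrightarrow> \<bar>(A ^\<^sub>m k) $$ (i,j)\<bar> \<le> (\<Sum>i<n. \<Sum>j<n. \<bar>A $$ (i,j)\<bar>) ^ k"
proof (induction k arbitrary: i j)
  case 0
  then show ?case using A by auto
next
  case (Suc k)
  let ?c = "\<Sum>i<n. \<Sum>j<n. \<bar>A $$ (i,j)\<bar>"
  have "\<bar>(A ^\<^sub>m Suc k) $$ (i,j)\<bar> = \<bar>\<Sum>l<n. (A ^\<^sub>m k) $$ (i,l) * A $$ (l,j)\<bar>"
    using A Suc.prems by (simp add: index_mult_mat_sum[of _ n n _ n] del: index_mult_mat(1))
  also have "\<dots> \<le> (\<Sum>l<n. ?c ^ k * \<bar>A $$ (l,j)\<bar>)"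
    using Suc by (intro order_trans[OF sum_abs] sum_mono) (auto simp: abs_mult intro: mult_right_mono)
  also have "\<dots> \<le> ?c ^ k * ?c"
    unfolding sum_distrib_left[symmetric]
    by (intro mult_left_mono sum_mono member_le_sum)
      (use Suc.prems in \<open>auto intro!: zero_le_power sum_nonneg\<close>)
  finally show ?case by (simp add: mult.commute)
qed

lemma summable_mat_exp_series:
  fixes A :: "real mat"
  assumes A: "A \<in> carrier_mat n n" and ij: "i < n" "j < n"
  shows "summable (\<lambda>k. \<bar>(A ^\<^sub>m k) $$ (i,j) / fact k * x ^ k\<bar>)"
proof (rule summable_comparison_test'[OF summable_exp])
  let ?c = "\<Sum>i<n. \<Sum>j<n. \<bar>A $$ (i,j)\<bar>"
  fix k :: nat
  have "\<bar>(A ^\<^sub>m k) $$ (i,j)\<bar> * \<bar>x\<bar> ^ k \<le> ?c ^ k * \<bar>x\<bar> ^ k"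
    by (intro mult_right_mono pow_mat_entry_bound[OF A ij]) auto
  then show "norm \<bar>(A ^\<^sub>m k) $$ (i,j) / fact k * x ^ k\<bar> \<le> inverse (fact k) * (?c * \<bar>x\<bar>) ^ k"
    by (simp add: abs_mult power_abs power_mult_distrib divide_simps)
qed

lemma index_mat_exp:
  assumes "A \<in> carrier_mat n n" "i < n" "j < n"
  shows "mat_exp (x \<cdot>\<^sub>m A) $$ (i,j) = (\<Sum>k. (A ^\<^sub>m k) $$ (i,j) / fact k * x ^ k)"
  using assms by (simp add: mat_exp_def pow_smult_mat field_simps)

lemma mat_exp_dim [simp]: "dim_row (mat_exp A) = dim_row A" "dim_col (mat_exp A) = dim_col A"
  by (simp_all add: mat_exp_def)

lemma mat_exp_carrier [simp]: "A \<in> carrier_mat n n \<Longrightarrow> mat_exp (x \<cdot>\<^sub>m A) \<in> carrier_mat n n"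
  by (simp add: mat_exp_def)

lemma index_mat_exp_mult:
  fixes A B :: "real mat"
  assumes A: "A \<in> carrier_mat n n" and B: "B \<in> carrier_mat n m" and ij: "i < n" "j < m"
  shows "(mat_exp (x \<cdot>\<^sub>m A) * B) $$ (i,j) = (\<Sum>k. (A ^\<^sub>m k * B) $$ (i,j) / fact k * x ^ k)"
proof -
  let ?a = "\<lambda>l k. (A ^\<^sub>m k) $$ (i,l) / fact k * x ^ k"
  have sum: "summable (?a l)" if "l < n" for l
    using summable_rabs_cancel[OF summable_mat_exp_series[OF A ij(1) that]] .
  have "(mat_exp (x \<cdot>\<^sub>m A) * B) $$ (i,j) = (\<Sum>l<n. (\<Sum>k. ?a l k) * B $$ (l,j))"
    using A B ij by (simp add: index_mult_mat_sum[of _ n n _ m] index_mat_exp del: index_mult_mat(1))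
  also have "\<dots> = (\<Sum>l<n. \<Sum>k. ?a l k * B $$ (l,j))"
    using sum by (intro sum.cong refl suminf_mult2) auto
  also have "\<dots> = (\<Sum>k. \<Sum>l<n. ?a l k * B $$ (l,j))"
    using sum by (intro suminf_sum[symmetric] summable_mult2) auto
  also have "\<dots> = (\<Sum>k. (A ^\<^sub>m k * B) $$ (i,j) / fact k * x ^ k)"
  proof (rule suminf_cong)
    fix k
    show "(\<Sum>l<n. ?a l k * B $$ (l,j)) = (A ^\<^sub>m k * B) $$ (i,j) / fact k * x ^ k"
      unfolding index_mult_mat_sum[OF pow_carrier_mat[OF A] B ij] sum_distrib_right sum_divide_distrib
      by (intro sum.cong) auto
  qed
  finally show ?thesis .
qed

lemma index_mult_mat_exp:
  fixes A B :: "real mat"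
  assumes A: "A \<in> carrier_mat n n" and B: "B \<in> carrier_mat m n" and ij: "i < m" "j < n"
  shows "(B * mat_exp (x \<cdot>\<^sub>m A)) $$ (i,j) = (\<Sum>k. (B * A ^\<^sub>m k) $$ (i,j) / fact k * x ^ k)"
proof -
  let ?a = "\<lambda>l k. (A ^\<^sub>m k) $$ (l,j) / fact k * x ^ k"
  have sum: "summable (?a l)" if "l < n" for l
    using summable_rabs_cancel[OF summable_mat_exp_series[OF A that ij(2)]] .
  have "(B * mat_exp (x \<cdot>\<^sub>m A)) $$ (i,j) = (\<Sum>l<n. B $$ (i,l) * (\<Sum>k. ?a l k))"
    using A B ij by (simp add: index_mult_mat_sum[of _ m n _ n] index_mat_exp del: index_mult_mat(1))
  also have "\<dots> = (\<Sum>l<n. \<Sum>k. B $$ (i,l) * ?a l k)"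
    using sum by (intro sum.cong refl suminf_mult[symmetric]) auto
  also have "\<dots> = (\<Sum>k. \<Sum>l<n. B $$ (i,l) * ?a l k)"
    using sum by (intro suminf_sum[symmetric] summable_mult) auto
  also have "\<dots> = (\<Sum>k. (B * A ^\<^sub>m k) $$ (i,j) / fact k * x ^ k)"
  proof (rule suminf_cong)
    fix k
    show "(\<Sum>l<n. B $$ (i,l) * ?a l k) = (B * A ^\<^sub>m k) $$ (i,j) / fact k * x ^ k"
      unfolding index_mult_mat_sum[OF B pow_carrier_mat[OF A] ij] sum_distrib_right sum_divide_distrib
      by (intro sum.cong) auto
  qed
  finally show ?thesis .
qed

lemma mat_exp_mult_commute:
  assumes A: "A \<in> carrier_mat n n"
  shows "mat_exp (x \<cdot>\<^sub>m A) * A = A * mat_exp (x \<cdot>\<^sub>m A)"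
proof (rule eq_matI)
  fix i j assume "i < dim_row (A * mat_exp (x \<cdot>\<^sub>m A))" "j < dim_col (A * mat_exp (x \<cdot>\<^sub>m A))"
  then have "i < n" "j < n" using A by auto
  then show "(mat_exp (x \<cdot>\<^sub>m A) * A) $$ (i,j) = (A * mat_exp (x \<cdot>\<^sub>m A)) $$ (i,j)"
    by (simp add: index_mat_exp_mult[OF A A] index_mult_mat_exp[OF A A] mult_pow_mat_commute[OF A])
qed (use A in auto)

lemma has_real_derivative_mat_exp:
  assumes A: "A \<in> carrier_mat n n" and ij: "i < n" "j < n"
  shows "((\<lambda>x. mat_exp (x \<cdot>\<^sub>m A) $$ (i,j)) has_real_derivative (mat_exp (x \<cdot>\<^sub>m A) * A) $$ (i,j)) (at x)"
proof -
  let ?c = "\<lambda>k. (A ^\<^sub>m k) $$ (i,j) / fact k"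
  have "((\<lambda>x. \<Sum>k. ?c k * x ^ k) has_real_derivative (\<Sum>k. diffs ?c k * x ^ k)) (at x)"
    using summable_rabs_cancel[OF summable_mat_exp_series[OF A ij]]
    by (intro termdiffs_strong_converges_everywhere) simp
  moreover have "diffs ?c k = (A ^\<^sub>m k * A) $$ (i,j) / fact k" for k
    by (simp add: diffs_def del: of_nat_Suc index_mult_mat(1))
  ultimately show ?thesis
    using A ij by (simp add: index_mat_exp index_mat_exp_mult[OF A A] del: index_mult_mat(1))
qed

lemma mat_exp_zero:
  assumes "A \<in> carrier_mat n n"
  shows "mat_exp (0 \<cdot>\<^sub>m A) = 1\<^sub>m n"
proof (rule eq_matI)
  fix i j assume "i < dim_row (1\<^sub>m n)" "j < dim_col (1\<^sub>m n)"
  then have ij: "i < n" "j < n" by auto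
  show "mat_exp (0 \<cdot>\<^sub>m A) $$ (i,j) = 1\<^sub>m n $$ (i,j)"
    unfolding index_mat_exp[OF assms ij] powser_zero using assms ij by auto
qed (use assms in auto)

lemma has_real_derivative_index_mult_mat:
  fixes R S :: "real \<Rightarrow> real mat"
  assumes RS: "\<And>y. R y \<in> carrier_mat n n" "\<And>y. S y \<in> carrier_mat n n"
    and R'S': "R' \<in> carrier_mat n n" "S' \<in> carrier_mat n n"
    and dR: "\<And>i j. i < n \<Longrightarrow> j < n \<Longrightarrow> ((\<lambda>y. R y $$ (i,j)) has_real_derivative R' $$ (i,j)) (at x)"
    and dS: "\<And>i j. i < n \<Longrightarrow> j < n \<Longrightarrow> ((\<lambda>y. S y $$ (i,j)) has_real_derivative S' $$ (i,j)) (at x)"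
    and ij: "i < n" "j < n"
  shows "((\<lambda>y. (R y * S y) $$ (i,j)) has_real_derivative (R' * S x + R x * S') $$ (i,j)) (at x)"
proof -
  have "(R' * S x + R x * S') $$ (i,j) = (\<Sum>l<n. R' $$ (i,l) * S x $$ (l,j) + R x $$ (i,l) * S' $$ (l,j))"
    using RS[of x] R'S' carrier_matD[OF RS(1)[of x]] carrier_matD[OF RS(2)[of x]] ij
    by (simp add: index_mult_mat_sum[of _ n n _ n] sum.distrib del: index_mult_mat(1))
  moreover have "((\<lambda>y. \<Sum>l<n. R y $$ (i,l) * S y $$ (l,j)) has_real_derivative
      (\<Sum>l<n. R' $$ (i,l) * S x $$ (l,j) + R x $$ (i,l) * S' $$ (l,j))) (at x)"
    using ij by (intro DERIV_sum) (auto intro!: derivative_eq_intros dR dS simp: mult.commute)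
  ultimately show ?thesis
    using RS ij by (simp add: index_mult_mat_sum[of _ n n _ n] del: index_mult_mat(1))
qed

lemma has_real_derivative_mat_exp_uminus:
  assumes A: "A \<in> carrier_mat n n" and ij: "i < n" "j < n"
  shows "((\<lambda>x. mat_exp ((- x) \<cdot>\<^sub>m A) $$ (i,j)) has_real_derivative
           (- (mat_exp ((- x) \<cdot>\<^sub>m A) * A)) $$ (i,j)) (at x)"
  using DERIV_chain2[OF has_real_derivative_mat_exp[OF A ij] DERIV_minus[OF DERIV_ident]] A ij
  by simp

text \<open>The product has derivative zero because \<open>A\<close> commutes with \<open>e\<^sup>-\<^sup>x\<^sup>A\<close>.\<close>
lemma mult_mat_exp_uminus_const:
  assumes A: "A \<in> carrier_mat n n" and R: "\<And>x. R x \<in> carrier_mat n n"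
    and dR: "\<And>x i j. i < n \<Longrightarrow> j < n \<Longrightarrow>
               ((\<lambda>x. R x $$ (i,j)) has_real_derivative (R x * A) $$ (i,j)) (at x)"
  shows "R x * mat_exp ((- x) \<cdot>\<^sub>m A) = R 0"
proof -
  let ?E = "\<lambda>x. mat_exp ((- x) \<cdot>\<^sub>m A)"
  have zero: "(R y * A) * ?E y + R y * (- (?E y * A)) = 0\<^sub>m n n" for y
  proof -
    have "R y * (- (?E y * A)) = - (R y * (A * ?E y))"
      using A R[of y] by (simp add: mat_exp_mult_commute[OF A] carrier_matD)
    also have "R y * (A * ?E y) = (R y * A) * ?E y"
      using A R[of y] by (simp add: assoc_mult_mat[of _ n n _ n _ n])
    finally show ?thesis
      using A R[of y] by (auto intro!: eq_matI)
  qed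
  have "((\<lambda>x. (R x * ?E x) $$ (i,j)) has_real_derivative 0) (at y)" if "i < n" "j < n" for y i j
  proof -
    have "((\<lambda>x. (R x * ?E x) $$ (i,j)) has_real_derivative
        ((R y * A) * ?E y + R y * (- (?E y * A))) $$ (i,j)) (at y)"
      by (rule has_real_derivative_index_mult_mat[OF R _ _ _ dR
            has_real_derivative_mat_exp_uminus[OF A] that])
        (use A R in \<open>auto intro!: mult_carrier_mat\<close>)
    then show ?thesis
      unfolding zero using that by simp
  qed
  then have "(R x * ?E x) $$ (i,j) = (R 0 * ?E 0) $$ (i,j)" if "i < n" "j < n" for i j
    using that by (intro DERIV_isconst_all[of "\<lambda>x. (R x * ?E x) $$ (i,j)"]) blast
  then have "R x * ?E x = R 0 * ?E 0"
    using A R[of x] R[of 0] by (intro eq_matI) auto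
  then show ?thesis
    using R[of 0] mat_exp_zero[OF A] by simp
qed

lemma mat_exp_uminus_inverse:
  assumes A: "A \<in> carrier_mat n n"
  shows "mat_exp (x \<cdot>\<^sub>m A) * mat_exp ((- x) \<cdot>\<^sub>m A) = 1\<^sub>m n"
  using mult_mat_exp_uminus_const[OF A _ has_real_derivative_mat_exp[OF A]] mat_exp_zero[OF A]
  by (simp add: A)

lemma mat_exp_unique:
  assumes A: "A \<in> carrier_mat n n" and R: "\<And>x. R x \<in> carrier_mat n n"
    and dR: "\<And>x i j. i < n \<Longrightarrow> j < n \<Longrightarrow>
               ((\<lambda>x. R x $$ (i,j)) has_real_derivative (R x * A) $$ (i,j)) (at x)"
    and R0: "R 0 = 1\<^sub>m n"
  shows "R x = mat_exp (x \<cdot>\<^sub>m A)"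
proof -
  let ?E = "\<lambda>x. mat_exp (x \<cdot>\<^sub>m A)"
  have "R x = R x * (?E (- x) * ?E x)"
    using mat_exp_uminus_inverse[OF A, of "- x"] R[of x] by simp
  also have "\<dots> = (R x * ?E (- x)) * ?E x"
    using A R[of x] by (simp add: assoc_mult_mat[of _ n n _ n _ n])
  also have "\<dots> = ?E x"
    using mult_mat_exp_uminus_const[OF A R dR] R0 A by simp
  finally show ?thesis .
qed

lemma mat_exp_affine:
  assumes A: "A \<in> carrier_mat n n"
  shows "mat_exp (x \<cdot>\<^sub>m (a \<cdot>\<^sub>m 1\<^sub>m n + b \<cdot>\<^sub>m A)) = exp (a * x) \<cdot>\<^sub>m mat_exp ((b * x) \<cdot>\<^sub>m A)"
proof (rule sym, rule mat_exp_unique[where R = "\<lambda>x. exp (a * x) \<cdot>\<^sub>m mat_exp ((b * x) \<cdot>\<^sub>m A)"])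
  let ?E = "\<lambda>x. mat_exp (x \<cdot>\<^sub>m A)"
  fix x :: real and i j assume ij: "i < n" "j < n"
  have "(exp (a * x) \<cdot>\<^sub>m ?E (b * x) * (a \<cdot>\<^sub>m 1\<^sub>m n + b \<cdot>\<^sub>m A)) $$ (i,j)
      = exp (a * x) * (a * ?E (b * x) $$ (i,j) + b * (?E (b * x) * A) $$ (i,j))"
    using A ij
    by (simp add: mult_add_distrib_mat[of _ n n _ n] mult_smult_distrib[of _ n n _ n]
        mult_smult_assoc_mat[of _ n n _ n] algebra_simps del: index_mult_mat(1))
  moreover have "((\<lambda>x. exp (a * x) * ?E (b * x) $$ (i,j)) has_real_derivative
      exp (a * x) * (a * ?E (b * x) $$ (i,j) + b * (?E (b * x) * A) $$ (i,j))) (at x)"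
    by (auto intro!: derivative_eq_intros DERIV_chain2[OF has_real_derivative_mat_exp[OF A ij]]
        simp: algebra_simps)
  ultimately show "((\<lambda>x. (exp (a * x) \<cdot>\<^sub>m ?E (b * x)) $$ (i,j)) has_real_derivative
      (exp (a * x) \<cdot>\<^sub>m ?E (b * x) * (a \<cdot>\<^sub>m 1\<^sub>m n + b \<cdot>\<^sub>m A)) $$ (i,j)) (at x)"
    using A ij by simp
qed (use A mat_exp_zero[OF A] in auto)

section \<open>Exponential decay for Hurwitz matrices\<close>

definition hurwitz :: "real mat \<Rightarrow> bool" where
  "hurwitz T \<longleftrightarrow> (\<forall>c. eigenvalue (map_mat complex_of_real T) c \<longrightarrow> Re c < 0)"

lemma eigenvalue_affine_mat:
  fixes A :: "'a :: field mat"
  assumes A: "A \<in> carrier_mat n n" and b: "b \<noteq> 0" and ev: "eigenvalue (a \<cdot>\<^sub>m 1\<^sub>m n + b \<cdot>\<^sub>m A) \<mu>"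
  shows "eigenvalue A ((\<mu> - a) / b)"
proof -
  have "char_matrix (a \<cdot>\<^sub>m 1\<^sub>m n + b \<cdot>\<^sub>m A) \<mu> = b \<cdot>\<^sub>m char_matrix A ((\<mu> - a) / b)"
    using A b by (intro eq_matI) (auto simp: char_matrix_def field_simps)
  moreover have "det (char_matrix (a \<cdot>\<^sub>m 1\<^sub>m n + b \<cdot>\<^sub>m A) \<mu>) = 0"
    using ev A by (subst eigenvalue_det[symmetric, of _ n]) auto
  ultimately show ?thesis
    using A b by (simp add: eigenvalue_det[OF A])
qed

lemma pow_mat_entry_bound_spectrum:
  fixes A :: "complex mat"
  assumes A: "A \<in> carrier_mat n n" and \<rho>: "\<rho> > 0"
    and ev: "\<And>\<mu>. eigenvalue A \<mu> \<Longrightarrow> cmod \<mu> < \<rho>"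
  obtains c where "\<And>k i j. i < n \<Longrightarrow> j < n \<Longrightarrow> cmod ((A ^\<^sub>m k) $$ (i,j)) \<le> c * \<rho> ^ k"
proof (cases "n = 0")
  case False
  define C where "C = complex_of_real (1 / \<rho>) \<cdot>\<^sub>m A"
  have C: "C \<in> carrier_mat n n" using A unfolding C_def by simp
  have "spectral_radius C < 1"
  proof -
    obtain \<mu> where \<mu>: "eigenvalue C \<mu>" and sr: "spectral_radius C = cmod \<mu>"
      using spectral_radius_mem_max(1)[OF C] False unfolding spectrum_def by auto
    have C_affine: "C = 0 \<cdot>\<^sub>m 1\<^sub>m n + complex_of_real (1 / \<rho>) \<cdot>\<^sub>m A"
      using A unfolding C_def by (intro eq_matI) auto
    have "eigenvalue A (\<mu> * complex_of_real \<rho>)"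
      using eigenvalue_affine_mat[OF A _ \<mu>[unfolded C_affine]] \<rho> by simp
    then have "cmod \<mu> * \<rho> < \<rho>"
      using ev \<rho> by (force simp: norm_mult)
    then show ?thesis using sr \<rho> by simp
  qed
  then obtain c where c: "\<And>k. norm_bound (C ^\<^sub>m k) c"
    using spectral_radius_jnf_norm_bound_less_1_upper_triangular[OF C] by blast
  have "cmod ((A ^\<^sub>m k) $$ (i,j)) \<le> c * \<rho> ^ k" if ij: "i < n" "j < n" for k i j
  proof -
    have "A = complex_of_real \<rho> \<cdot>\<^sub>m C"
      using A \<rho> unfolding C_def by (intro eq_matI) auto
    then have "(A ^\<^sub>m k) $$ (i,j) = complex_of_real \<rho> ^ k * (C ^\<^sub>m k) $$ (i,j)"
      using C ij by (simp add: pow_smult_mat)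
    moreover have "cmod ((C ^\<^sub>m k) $$ (i,j)) \<le> c"
      using c[of k] C ij unfolding norm_bound_def by auto
    ultimately show ?thesis
      using \<rho> by (simp add: norm_mult norm_power mult.commute mult_left_mono)
  qed
  then show ?thesis by (rule that)
qed (use that in auto)

lemma mat_exp_entry_bound_spectrum:
  fixes B :: "real mat"
  assumes B: "B \<in> carrier_mat n n" and \<rho>: "\<rho> > 0"
    and ev: "\<And>\<mu>. eigenvalue (map_mat complex_of_real B) \<mu> \<Longrightarrow> cmod \<mu> < \<rho>"
  obtains c where "\<And>s i j. s \<ge> 0 \<Longrightarrow> i < n \<Longrightarrow> j < n \<Longrightarrow> \<bar>mat_exp (s \<cdot>\<^sub>m B) $$ (i,j)\<bar> \<le> c * exp (\<rho> * s)"
proof -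
  have Bc: "map_mat complex_of_real B \<in> carrier_mat n n" using B by simp
  obtain c where c: "\<And>k i j. i < n \<Longrightarrow> j < n \<Longrightarrow>
      cmod ((map_mat complex_of_real B ^\<^sub>m k) $$ (i,j)) \<le> c * \<rho> ^ k"
    using pow_mat_entry_bound_spectrum[OF Bc \<rho> ev] by blast
  have pow: "\<bar>(B ^\<^sub>m k) $$ (i,j)\<bar> \<le> c * \<rho> ^ k" if "i < n" "j < n" for k i j
    using c[OF that, of k] B that by (simp add: of_real_hom.mat_hom_pow[OF B, symmetric])
  have "\<bar>mat_exp (s \<cdot>\<^sub>m B) $$ (i,j)\<bar> \<le> c * exp (\<rho> * s)" if s: "s \<ge> 0" and ij: "i < n" "j < n" for s i j
  proof -
    have exp: "(\<lambda>k. c * ((\<rho> * s) ^ k / fact k)) sums (c * exp (\<rho> * s))"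
      using sums_mult[OF exp_converges[of "\<rho> * s"], of c] by (simp add: divide_inverse mult.commute)
    have "\<bar>mat_exp (s \<cdot>\<^sub>m B) $$ (i,j)\<bar> \<le> (\<Sum>k. \<bar>(B ^\<^sub>m k) $$ (i,j) / fact k * s ^ k\<bar>)"
      unfolding index_mat_exp[OF B ij] by (rule summable_rabs[OF summable_mat_exp_series[OF B ij]])
    also have "\<dots> \<le> (\<Sum>k. c * ((\<rho> * s) ^ k / fact k))"
    proof (rule suminf_le[OF _ summable_mat_exp_series[OF B ij] sums_summable[OF exp]])
      fix k
      have "\<bar>(B ^\<^sub>m k) $$ (i,j)\<bar> * s ^ k \<le> c * \<rho> ^ k * s ^ k"
        using pow[OF ij] s by (intro mult_right_mono) auto
      then show "\<bar>(B ^\<^sub>m k) $$ (i,j) / fact k * s ^ k\<bar> \<le> c * ((\<rho> * s) ^ k / fact k)"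
        using s by (simp add: abs_mult power_mult_distrib divide_simps mult_ac)
    qed
    also have "\<dots> = c * exp (\<rho> * s)"
      using exp by (rule sums_unique[symmetric])
    finally show ?thesis .
  qed
  then show ?thesis by (rule that)
qed

text \<open>Any \<open>0 < h \<le> - Re l / \<bar>l\<bar>\<^sup>2\<close> gives
  \<open>\<bar>1 + h l\<bar>\<^sup>2 = 1 + 2 h Re l + h\<^sup>2 \<bar>l\<bar>\<^sup>2 \<le> 1 + h Re l < 1\<close>.\<close>
lemma left_half_plane_shift_contraction:
  fixes S :: "complex set"
  assumes S: "finite S" and neg: "\<And>l. l \<in> S \<Longrightarrow> Re l < 0"
  obtains h \<rho> where "h > 0" "0 < \<rho>" "\<rho> < 1" "\<And>l. l \<in> S \<Longrightarrow> cmod (1 + complex_of_real h * l) < \<rho>"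
proof -
  define h where "h = Min (insert 1 ((\<lambda>l. - Re l / (cmod l)\<^sup>2) ` S))"
  have "- Re l / (cmod l)\<^sup>2 > 0" if "l \<in> S" for l
    using neg[OF that] by (intro divide_pos_pos) auto
  then have h: "h > 0"
    unfolding h_def using S by (auto simp: Min_gr_iff)
  have lt1: "cmod (1 + complex_of_real h * l) < 1" if l: "l \<in> S" for l
  proof -
    have "(cmod l)\<^sup>2 > 0" using neg[OF l] by auto
    moreover have "h \<le> - Re l / (cmod l)\<^sup>2"
      unfolding h_def using S l by (intro Min_le) auto
    ultimately have "h * (cmod l)\<^sup>2 \<le> - Re l"
      by (metis pos_le_divide_eq)
    then have "h * (h * (cmod l)\<^sup>2) \<le> h * (- Re l)"
      using h by (intro mult_left_mono) auto
    moreover have "(cmod (1 + complex_of_real h * l))\<^sup>2 = 1 + 2 * h * Re l + h * (h * (cmod l)\<^sup>2)"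
      unfolding cmod_power2 by (simp add: power2_eq_square algebra_simps)
    ultimately have "(cmod (1 + complex_of_real h * l))\<^sup>2 < 1\<^sup>2"
      using h neg[OF l] mult_pos_neg[OF h neg[OF l]] by simp
    then show ?thesis
      by (rule power_less_imp_less_base) simp
  qed
  define m where "m = Max (insert 0 ((\<lambda>l. cmod (1 + complex_of_real h * l)) ` S))"
  have m: "0 \<le> m" "m < 1" "\<And>l. l \<in> S \<Longrightarrow> cmod (1 + complex_of_real h * l) \<le> m"
    unfolding m_def using S lt1 by (auto simp: Max_less_iff)
  show ?thesis
    by (rule that[of h "(1 + m) / 2"]) (use h m in \<open>force+\<close>)
qed

lemma hurwitz_shift_spectrum:
  assumes T: "T \<in> carrier_mat n n" and "hurwitz T"
  obtains h \<rho> where "h > 0" "0 < \<rho>" "\<rho> < 1"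
    "\<And>\<mu>. eigenvalue (map_mat complex_of_real (1\<^sub>m n + h \<cdot>\<^sub>m T)) \<mu> \<Longrightarrow> cmod \<mu> < \<rho>"
proof -
  let ?Tc = "map_mat complex_of_real T"
  obtain h \<rho> where h: "h > 0" and \<rho>: "0 < \<rho>" "\<rho> < 1"
    and contr: "\<And>l. l \<in> spectrum ?Tc \<Longrightarrow> cmod (1 + complex_of_real h * l) < \<rho>"
    using left_half_plane_shift_contraction[of "spectrum ?Tc"] card_finite_spectrum(1)[of ?Tc n] T
      \<open>hurwitz T\<close> unfolding hurwitz_def spectrum_def by auto
  have "cmod \<mu> < \<rho>" if \<mu>: "eigenvalue (map_mat complex_of_real (1\<^sub>m n + h \<cdot>\<^sub>m T)) \<mu>" for \<mu>
  proof -
    have "map_mat complex_of_real (1\<^sub>m n + h \<cdot>\<^sub>m T) = 1 \<cdot>\<^sub>m 1\<^sub>m n + complex_of_real h \<cdot>\<^sub>m ?Tc"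
      using T by (intro eq_matI) auto
    then have "eigenvalue ?Tc ((\<mu> - 1) / complex_of_real h)"
      using eigenvalue_affine_mat[of ?Tc n "complex_of_real h" 1 \<mu>] T h \<mu> by simp
    then show ?thesis
      using contr h unfolding spectrum_def by force
  qed
  with h \<rho> show ?thesis by (rule that)
qed

lemma mat_exp_decay:
  assumes T: "T \<in> carrier_mat n n" and "hurwitz T"
  obtains C \<delta> where "\<delta> > 0"
    "\<And>x i j. x \<ge> 0 \<Longrightarrow> i < n \<Longrightarrow> j < n \<Longrightarrow> \<bar>mat_exp (x \<cdot>\<^sub>m T) $$ (i,j)\<bar> \<le> C * exp (- \<delta> * x)"
proof -
  obtain h \<rho> where h: "h > 0" and \<rho>: "0 < \<rho>" "\<rho> < 1"
    and ev: "\<And>\<mu>. eigenvalue (map_mat complex_of_real (1\<^sub>m n + h \<cdot>\<^sub>m T)) \<mu> \<Longrightarrow> cmod \<mu> < \<rho>"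
    by (rule hurwitz_shift_spectrum[OF T \<open>hurwitz T\<close>]) blast
  define B where "B = 1\<^sub>m n + h \<cdot>\<^sub>m T"
  have B: "B \<in> carrier_mat n n" using T unfolding B_def by simp
  obtain c where c: "\<And>s i j. s \<ge> 0 \<Longrightarrow> i < n \<Longrightarrow> j < n \<Longrightarrow>
      \<bar>mat_exp (s \<cdot>\<^sub>m B) $$ (i,j)\<bar> \<le> c * exp (\<rho> * s)"
    using mat_exp_entry_bound_spectrum[OF B \<rho>(1) ev[folded B_def]] by blast
  have "\<bar>mat_exp (x \<cdot>\<^sub>m T) $$ (i,j)\<bar> \<le> c * exp (- ((1 - \<rho>) / h) * x)"
    if x: "x \<ge> 0" and ij: "i < n" "j < n" for x i j
  proof -
    have "T = (- 1 / h) \<cdot>\<^sub>m 1\<^sub>m n + (1 / h) \<cdot>\<^sub>m B"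
      using T h unfolding B_def by (intro eq_matI) (auto simp: field_simps)
    then have "mat_exp (x \<cdot>\<^sub>m T) = exp (- 1 / h * x) \<cdot>\<^sub>m mat_exp ((1 / h * x) \<cdot>\<^sub>m B)"
      using mat_exp_affine[OF B, of x "- 1 / h" "1 / h"] by simp
    then have "\<bar>mat_exp (x \<cdot>\<^sub>m T) $$ (i,j)\<bar> = exp (- 1 / h * x) * \<bar>mat_exp ((1 / h * x) \<cdot>\<^sub>m B) $$ (i,j)\<bar>"
      using B ij by (simp add: abs_mult)
    also have "\<dots> \<le> exp (- 1 / h * x) * (c * exp (\<rho> * (1 / h * x)))"
      using c[of "1 / h * x" i j] h x ij by (intro mult_left_mono) auto
    also have "\<dots> = c * exp (- 1 / h * x + \<rho> * (1 / h * x))"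
      by (simp only: exp_add mult_ac)
    also have "- 1 / h * x + \<rho> * (1 / h * x) = - ((1 - \<rho>) / h) * x"
      using h by (simp add: field_simps)
    finally show ?thesis .
  qed
  moreover have "(1 - \<rho>) / h > 0" using \<rho> h by simp
  ultimately show ?thesis using that by blast
qed

section \<open>Moments of matrix-exponential densities\<close>

lemma hurwitz_mat_inverse_uminus:
  assumes T: "T \<in> carrier_mat n n" and "hurwitz T"
  obtains Ainv where "mat_inverse (- T) = Some Ainv" "Ainv \<in> carrier_mat n n" "(- T) * Ainv = 1\<^sub>m n"
proof (cases "mat_inverse (- T)")
  case None
  then have "det (- T) = 0"
    using mat_inverse(1)[of "- T" n, of "()"] det_non_zero_imp_unit[of "- T" n "()"] T by auto
  moreover have "T + 0 \<cdot>\<^sub>m 1\<^sub>m n = T"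
    using T by (intro eq_matI) auto
  ultimately have "eigenvalue T 0"
    using T by (simp add: eigenvalue_det[OF T] char_matrix_def det_0_negate[OF T])
  then have "eigenvalue (map_mat complex_of_real T) 0"
    using of_real_hom.eigenvalue_hom[OF T] by fastforce
  then show ?thesis using \<open>hurwitz T\<close> unfolding hurwitz_def by fastforce
next
  case (Some Ainv)
  then show ?thesis using mat_inverse(2)[of "- T" n] T that by auto
qed

lemma set_integral_Ici_derivative:
  fixes G g :: "real \<Rightarrow> real"
  assumes G: "\<And>x. (G has_real_derivative g x) (at x)" and g: "\<And>x. isCont g x"
    and int: "set_integrable lborel {0..} g" and lim: "(G \<longlongrightarrow> 0) at_top"
  shows "(LINT x:{0..}|lborel. g x) = - G 0"
proof -
  have int': "set_integrable lborel {0<..} g"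
    by (rule set_integrable_subset[OF int]) auto
  have "(LINT x:{0..}|lborel. g x) = (LINT x:{0<..}|lborel. g x)"
  proof (rule set_integral_cong_set)
    show "set_borel_measurable lborel {0..} g" "set_borel_measurable lborel {0<..} g"
      using int int' unfolding set_integrable_def set_borel_measurable_def
      by (auto intro: borel_measurable_integrable)
    show "AE x in lborel. ((x::real) \<in> {0<..}) = (x \<in> {0..})"
      using AE_lborel_singleton[of 0] by eventually_elim auto
  qed
  also have "\<dots> = (LBINT x=ereal 0..\<infinity>. g x)"
    by (rule interval_integral_to_infinity_eq[symmetric])
  also have "\<dots> = 0 - G 0"
  proof (rule interval_integral_FTC_integrable)
    show "(G has_vector_derivative g x) (at x)" for x
      using G[of x] by (simp add: has_real_derivative_iff_has_vector_derivative)
    show "set_integrable lborel (einterval (ereal 0) \<infinity>) g"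
      using int' by (simp add: einterval_eq_Ici)
    have "(G \<longlongrightarrow> G 0) (at_right 0)"
      using DERIV_isCont[OF G] by (intro tendsto_mono[OF at_within_le_at isContD]) auto
    then show "((G \<circ> real_of_ereal) \<longlongrightarrow> G 0) (at_right (ereal 0))"
      by (simp add: ereal_tendsto_simps1)
    show "((G \<circ> real_of_ereal) \<longlongrightarrow> 0) (at_left \<infinity>)"
      using lim by (simp add: ereal_tendsto_simps1)
  qed (use g in auto)
  finally show ?thesis by simp
qed

lemma scalar_prod_mult_mat_vec_sum:
  assumes "M \<in> carrier_mat n n" "\<alpha> \<in> carrier_vec n" "w \<in> carrier_vec n"
  shows "\<alpha> \<bullet> (M *\<^sub>v w) = (\<Sum>i<n. \<Sum>j<n. \<alpha> $ i * M $$ (i,j) * w $ j)"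
  using assms
  by (simp add: scalar_prod_def lessThan_atLeast0 index_mult_mat_vec_sum sum_distrib_left mult.assoc
      del: index_mult_mat_vec)

context
  fixes \<alpha> :: "real vec" and T :: "real mat" and n :: nat
  assumes T: "T \<in> carrier_mat n n" and \<alpha>: "\<alpha> \<in> carrier_vec n"
begin

lemma has_real_derivative_ME_fun:
  assumes w: "w \<in> carrier_vec n"
  shows "(ME_fun \<alpha> T w has_real_derivative ME_fun \<alpha> T (T *\<^sub>v w) x) (at x)"
proof -
  have "ME_fun \<alpha> T (T *\<^sub>v w) x = (\<Sum>i<n. \<Sum>j<n. \<alpha> $ i * (mat_exp (x \<cdot>\<^sub>m T) * T) $$ (i,j) * w $ j)"
    unfolding ME_fun_def assoc_mult_mat_vec[OF mat_exp_carrier[OF T] T w, symmetric]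
    by (rule scalar_prod_mult_mat_vec_sum[OF mult_carrier_mat[OF mat_exp_carrier[OF T] T] \<alpha> w])
  then show ?thesis
    unfolding ME_fun_def scalar_prod_mult_mat_vec_sum[OF mat_exp_carrier[OF T] \<alpha> w]
    by (simp only:)
      (intro DERIV_sum DERIV_cmult_right DERIV_cmult has_real_derivative_mat_exp[OF T]; simp)
qed

lemma isCont_ME_fun: "w \<in> carrier_vec n \<Longrightarrow> isCont (ME_fun \<alpha> T w) x"
  using DERIV_isCont[OF has_real_derivative_ME_fun] .

lemma ME_fun_zero: "w \<in> carrier_vec n \<Longrightarrow> ME_fun \<alpha> T w 0 = \<alpha> \<bullet> w"
  unfolding ME_fun_def using T by (simp add: mat_exp_zero[OF T])

lemma ME_fun_uminus:
  assumes w: "w \<in> carrier_vec n"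
  shows "ME_fun \<alpha> T (- w) x = - ME_fun \<alpha> T w x"
proof -
  have "mat_exp (x \<cdot>\<^sub>m T) *\<^sub>v (- w) = - (mat_exp (x \<cdot>\<^sub>m T) *\<^sub>v w)"
    using T w by (intro eq_vecI) auto
  then show ?thesis
    unfolding ME_fun_def using T \<alpha> by simp
qed

lemma ME_fun_decay:
  assumes "hurwitz T" and w: "w \<in> carrier_vec n"
  obtains C \<delta> where "\<delta> > 0" "\<And>x. x \<ge> 0 \<Longrightarrow> \<bar>ME_fun \<alpha> T w x\<bar> \<le> C * exp (- \<delta> * x)"
proof -
  obtain C \<delta> where \<delta>: "\<delta> > 0" and E: "\<And>x i j. x \<ge> 0 \<Longrightarrow> i < n \<Longrightarrow> j < n \<Longrightarrow>
      \<bar>mat_exp (x \<cdot>\<^sub>m T) $$ (i,j)\<bar> \<le> C * exp (- \<delta> * x)"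
    by (rule mat_exp_decay[OF T \<open>hurwitz T\<close>]) blast
  define K where "K = (\<Sum>i<n. \<Sum>j<n. \<bar>\<alpha> $ i\<bar> * \<bar>w $ j\<bar>)"
  have "\<bar>ME_fun \<alpha> T w x\<bar> \<le> K * C * exp (- \<delta> * x)" if x: "x \<ge> 0" for x
  proof -
    have "\<bar>ME_fun \<alpha> T w x\<bar> \<le> (\<Sum>i<n. \<Sum>j<n. \<bar>\<alpha> $ i * mat_exp (x \<cdot>\<^sub>m T) $$ (i,j) * w $ j\<bar>)"
      unfolding ME_fun_def scalar_prod_mult_mat_vec_sum[OF mat_exp_carrier[OF T] \<alpha> w]
      by (rule order_trans[OF sum_abs]) (intro sum_mono sum_abs)
    also have "\<dots> \<le> (\<Sum>i<n. \<Sum>j<n. \<bar>\<alpha> $ i\<bar> * \<bar>w $ j\<bar> * (C * exp (- \<delta> * x)))"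
    proof (intro sum_mono)
      fix i j assume "i \<in> {..<n}" "j \<in> {..<n}"
      then have "\<bar>\<alpha> $ i\<bar> * \<bar>w $ j\<bar> * \<bar>mat_exp (x \<cdot>\<^sub>m T) $$ (i,j)\<bar>
          \<le> \<bar>\<alpha> $ i\<bar> * \<bar>w $ j\<bar> * (C * exp (- \<delta> * x))"
        using E[OF x] by (intro mult_left_mono) auto
      then show "\<bar>\<alpha> $ i * mat_exp (x \<cdot>\<^sub>m T) $$ (i,j) * w $ j\<bar>
          \<le> \<bar>\<alpha> $ i\<bar> * \<bar>w $ j\<bar> * (C * exp (- \<delta> * x))"
        by (simp only: abs_mult mult_ac)
    qed
    also have "\<dots> = K * C * exp (- \<delta> * x)"
      unfolding K_def by (simp only: sum_distrib_right mult.assoc)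
    finally show ?thesis .
  qed
  with \<delta> show ?thesis by (rule that)
qed

lemma ME_fun_moment_tendsto_zero:
  assumes "hurwitz T" and w: "w \<in> carrier_vec n"
  shows "((\<lambda>x. x ^ r * ME_fun \<alpha> T w x) \<longlongrightarrow> 0) at_top"
proof -
  obtain C \<delta> where \<delta>: "\<delta> > 0" and bound: "\<And>x. x \<ge> 0 \<Longrightarrow> \<bar>ME_fun \<alpha> T w x\<bar> \<le> C * exp (- \<delta> * x)"
    by (rule ME_fun_decay[OF assms]) blast
  have "\<forall>\<^sub>F x in at_top. norm (x ^ r * ME_fun \<alpha> T w x) \<le> C * (x ^ r * exp (- \<delta> * x))"
    using eventually_ge_at_top[of 0]
  proof eventually_elim
    case (elim x)
    then have "x ^ r * \<bar>ME_fun \<alpha> T w x\<bar> \<le> x ^ r * (C * exp (- \<delta> * x))"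
      by (intro mult_left_mono bound) auto
    then show ?case
      using elim by (simp add: abs_mult mult_ac)
  qed
  moreover have "((\<lambda>x. C * (x ^ r * exp (- \<delta> * x))) \<longlongrightarrow> 0) at_top"
    using \<delta> by real_asymp
  ultimately show ?thesis by (rule Lim_null_comparison)
qed

lemma set_integrable_ME_fun_moment:
  assumes "hurwitz T" and w: "w \<in> carrier_vec n"
  shows "set_integrable lborel {0..} (\<lambda>x. x ^ r * ME_fun \<alpha> T w x)"
proof -
  obtain C \<delta> where \<delta>: "\<delta> > 0" and bound: "\<And>x. x \<ge> 0 \<Longrightarrow> \<bar>ME_fun \<alpha> T w x\<bar> \<le> C * exp (- \<delta> * x)"
    by (rule ME_fun_decay[OF assms]) blast
  have [measurable]: "ME_fun \<alpha> T w \<in> borel_measurable borel"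
    using isCont_ME_fun[OF w]
    by (intro borel_measurable_continuous_onI continuous_at_imp_continuous_on) auto
  have "integrable lborel (\<lambda>x. C / \<delta> * (erlang_density 0 \<delta> x * x ^ r))"
    using nn_integral_erlang_ith_moment[OF \<delta>, of 0 r] \<delta>
    by (intro integrable_mult_right integrableI_nonneg) (auto simp: erlang_density_def)
  then show ?thesis
    unfolding set_integrable_def
  proof (rule Bochner_Integration.integrable_bound)
    show "AE x in lborel. norm (indicator {0..} x *\<^sub>R (x ^ r * ME_fun \<alpha> T w x))
        \<le> norm (C / \<delta> * (erlang_density 0 \<delta> x * x ^ r))"
    proof (rule AE_I2)
      fix x :: real
      show "norm (indicator {0..} x *\<^sub>R (x ^ r * ME_fun \<alpha> T w x))
          \<le> norm (C / \<delta> * (erlang_density 0 \<delta> x * x ^ r))"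
      proof (cases "x \<ge> 0")
        case True
        have "\<bar>ME_fun \<alpha> T w x\<bar> \<le> \<bar>C\<bar> * exp (- \<delta> * x)"
          using bound[OF True] by (rule order_trans) (simp add: mult_right_mono)
        then have "x ^ r * \<bar>ME_fun \<alpha> T w x\<bar> \<le> x ^ r * (\<bar>C\<bar> * exp (- \<delta> * x))"
          using True by (intro mult_left_mono) auto
        then show ?thesis
          using True \<delta> by (simp add: abs_mult erlang_density_def mult_ac)
      qed simp
    qed
  qed measurable
qed

text \<open>Integration by parts against \<open>x\<^sup>r e\<^sup>T\<^sup>x (-T)\<^sup>-\<^sup>1 w\<close>, whose derivative is
  \<open>r x\<^sup>r\<^sup>-\<^sup>1 e\<^sup>T\<^sup>x (-T)\<^sup>-\<^sup>1 w - x\<^sup>r e\<^sup>T\<^sup>x w\<close>; the boundary term \<open>0 ^ r\<close> survives only for \<open>r = 0\<close>.\<close>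
lemma ME_fun_moment_recurrence:
  assumes "hurwitz T" and w: "w \<in> carrier_vec n"
    and Ainv: "Ainv \<in> carrier_mat n n" "(- T) * Ainv = 1\<^sub>m n"
  shows "(LINT x:{0..}|lborel. x ^ r * ME_fun \<alpha> T w x) =
    real r * (LINT x:{0..}|lborel. x ^ (r - 1) * ME_fun \<alpha> T (Ainv *\<^sub>v w) x) + 0 ^ r * (\<alpha> \<bullet> (Ainv *\<^sub>v w))"
proof -
  let ?v = "Ainv *\<^sub>v w"
  have v: "?v \<in> carrier_vec n" using Ainv w by simp
  have "- (T * Ainv) = 1\<^sub>m n"
    using Ainv uminus_mult_left_mat[of T Ainv] carrier_matD[OF T] carrier_matD[OF Ainv(1)] by simp
  then have "T * Ainv = - 1\<^sub>m n"
    by (metis uminus_uminus_mat)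
  then have "T *\<^sub>v ?v = - w"
    using T Ainv w by (simp add: assoc_mult_mat_vec[symmetric, of _ n n _ n])
  then have dG: "((\<lambda>x. x ^ r * ME_fun \<alpha> T ?v x) has_real_derivative
      real r * (x ^ (r - 1) * ME_fun \<alpha> T ?v x) - x ^ r * ME_fun \<alpha> T w x) (at x)" for x
    using DERIV_mult[OF DERIV_pow has_real_derivative_ME_fun[OF v]] w
    by (simp add: ME_fun_uminus algebra_simps)
  have int_r: "set_integrable lborel {0..} (\<lambda>x. x ^ r * ME_fun \<alpha> T w x)"
    using set_integrable_ME_fun_moment[OF \<open>hurwitz T\<close> w] .
  have int_r1: "set_integrable lborel {0..} (\<lambda>x. real r * (x ^ (r - 1) * ME_fun \<alpha> T ?v x))"
    using set_integrable_ME_fun_moment[OF \<open>hurwitz T\<close> v] by (rule set_integrable_mult_right)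
  have "(LINT x:{0..}|lborel. real r * (x ^ (r - 1) * ME_fun \<alpha> T ?v x) - x ^ r * ME_fun \<alpha> T w x)
      = - (0 ^ r * ME_fun \<alpha> T ?v 0)"
  proof (rule set_integral_Ici_derivative[where G = "\<lambda>x. x ^ r * ME_fun \<alpha> T ?v x", OF dG])
    show "isCont (\<lambda>x. real r * (x ^ (r - 1) * ME_fun \<alpha> T ?v x) - x ^ r * ME_fun \<alpha> T w x) x" for x
      using isCont_ME_fun[OF v] isCont_ME_fun[OF w] by (intro continuous_intros) auto
    show "set_integrable lborel {0..}
        (\<lambda>x. real r * (x ^ (r - 1) * ME_fun \<alpha> T ?v x) - x ^ r * ME_fun \<alpha> T w x)"
      by (rule set_integral_diff(1)[OF int_r1 int_r])
  qed (rule ME_fun_moment_tendsto_zero[OF \<open>hurwitz T\<close> v])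
  moreover have "(LINT x:{0..}|lborel. real r * (x ^ (r - 1) * ME_fun \<alpha> T ?v x) - x ^ r * ME_fun \<alpha> T w x)
      = real r * (LINT x:{0..}|lborel. x ^ (r - 1) * ME_fun \<alpha> T ?v x)
        - (LINT x:{0..}|lborel. x ^ r * ME_fun \<alpha> T w x)"
    by (simp only: set_integral_diff(2)[OF int_r1 int_r] set_integral_mult_right)
  ultimately show ?thesis
    by (simp only: ME_fun_zero[OF v])
qed

lemma ME_fun_moment:
  assumes "hurwitz T" and Ainv: "Ainv \<in> carrier_mat n n" "(- T) * Ainv = 1\<^sub>m n"
  shows "w \<in> carrier_vec n \<Longrightarrow>
    (LINT x:{0..}|lborel. x ^ r * ME_fun \<alpha> T w x) = fact r * (\<alpha> \<bullet> (Ainv ^\<^sub>m (r + 1) *\<^sub>v w))"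
proof (induction r arbitrary: w)
  case 0
  then show ?case
    using ME_fun_moment_recurrence[OF assms(1) 0 Ainv, of 0] Ainv by simp
next
  case (Suc r)
  have "Ainv ^\<^sub>m (Suc r + 1) *\<^sub>v w = Ainv ^\<^sub>m (r + 1) *\<^sub>v (Ainv *\<^sub>v w)"
    using assoc_mult_mat_vec[OF pow_carrier_mat[OF Ainv(1)] Ainv(1) Suc.prems, of "r + 1"] by simp
  then show ?case
    using ME_fun_moment_recurrence[OF assms(1) Suc.prems Ainv, of "Suc r"] Suc.IH[of "Ainv *\<^sub>v w"]
      Ainv Suc.prems by simp
qed

end


lemma ME_triple_moment:
  assumes "ME_triple \<alpha> T t"
  shows "set_integrable lborel {0..} (\<lambda>z. z ^ r * ME_fun \<alpha> T t z)"
    and "(LINT z:{0..}|lborel. z ^ r * ME_fun \<alpha> T t z)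
           = fact r * (\<alpha> \<bullet> (the (mat_inverse (- T)) ^\<^sub>m (r + 1) *\<^sub>v t))"
proof -
  obtain n where T: "T \<in> carrier_mat n n" and \<alpha>: "\<alpha> \<in> carrier_vec n" and t: "t \<in> carrier_vec n"
    and stable: "hurwitz T"
    using assms unfolding ME_triple_def hurwitz_def carrier_vec_def by auto
  obtain Ainv where Ainv: "mat_inverse (- T) = Some Ainv" "Ainv \<in> carrier_mat n n" "(- T) * Ainv = 1\<^sub>m n"
    by (rule hurwitz_mat_inverse_uminus[OF T stable])
  show "set_integrable lborel {0..} (\<lambda>z. z ^ r * ME_fun \<alpha> T t z)"
    by (rule set_integrable_ME_fun_moment[OF T \<alpha> stable t])
  show "(LINT z:{0..}|lborel. z ^ r * ME_fun \<alpha> T t z)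
      = fact r * (\<alpha> \<bullet> (the (mat_inverse (- T)) ^\<^sub>m (r + 1) *\<^sub>v t))"
    using ME_fun_moment[OF T \<alpha> stable Ainv(2,3) t] Ainv(1) by simp
qed

section \<open>Mixtures of products of densities\<close>

lemma indicator_orthant:
  assumes "y \<in> extensional {1..k}"
  shows "indicator (orthant k) y = (\<Prod>m\<in>{1..k}. indicator {0..} (y m) :: real)"
  using assms by (auto simp: orthant_def indicator_def PiE_iff extensional_def)

lemma set_integral_orthant_prod:
  fixes g :: "nat \<Rightarrow> real \<Rightarrow> real"
  assumes g: "\<And>m. m \<in> {1..k} \<Longrightarrow> set_integrable lborel {0..} (g m)"
  shows "set_integrable (PiM {1..k} (\<lambda>_. lborel)) (orthant k) (\<lambda>y. \<Prod>m\<in>{1..k}. g m (y m))"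
    and "(LINT y:orthant k|PiM {1..k} (\<lambda>_. lborel). \<Prod>m\<in>{1..k}. g m (y m))
           = (\<Prod>m\<in>{1..k}. LINT z:{0..}|lborel. g m z)"
proof -
  interpret product_sigma_finite "\<lambda>_::nat. lborel :: real measure" by standard
  let ?h = "\<lambda>m z. indicator {0..} z * g m z"
  have h: "integrable lborel (?h m)" if "m \<in> {1..k}" for m
    using g[OF that] unfolding set_integrable_def by simp
  have eq: "indicator (orthant k) y *\<^sub>R (\<Prod>m\<in>{1..k}. g m (y m)) = (\<Prod>m\<in>{1..k}. ?h m (y m))"
    if "y \<in> space (PiM {1..k} (\<lambda>_. lborel))" for y
    using that by (simp add: indicator_orthant space_PiM PiE_def prod.distrib)
  show "set_integrable (PiM {1..k} (\<lambda>_. lborel)) (orthant k) (\<lambda>y. \<Prod>m\<in>{1..k}. g m (y m))"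
    unfolding set_integrable_def using product_integrable_prod[of "{1..k}" ?h] h
    by (subst Bochner_Integration.integrable_cong[OF refl eq]) auto
  have "(LINT y:orthant k|PiM {1..k} (\<lambda>_. lborel). \<Prod>m\<in>{1..k}. g m (y m))
      = (LINT y|PiM {1..k} (\<lambda>_. lborel). (\<Prod>m\<in>{1..k}. ?h m (y m)))"
    unfolding set_lebesgue_integral_def by (rule Bochner_Integration.integral_cong[OF refl eq])
  also have "\<dots> = (\<Prod>m\<in>{1..k}. integral\<^sup>L lborel (?h m))"
    by (rule product_integral_prod) (use h in auto)
  also have "\<dots> = (\<Prod>m\<in>{1..k}. LINT z:{0..}|lborel. g m z)"
    by (simp add: set_lebesgue_integral_def)
  finally show "(LINT y:orthant k|PiM {1..k} (\<lambda>_. lborel). \<Prod>m\<in>{1..k}. g m (y m))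
      = (\<Prod>m\<in>{1..k}. LINT z:{0..}|lborel. g m z)" .
qed

lemma set_integral_orthant_sum_prod:
  fixes g :: "'i \<Rightarrow> nat \<Rightarrow> real \<Rightarrow> real"
  assumes S: "finite S" and g: "\<And>i m. i \<in> S \<Longrightarrow> m \<in> {1..k} \<Longrightarrow> set_integrable lborel {0..} (g i m)"
  shows "set_integrable (PiM {1..k} (\<lambda>_. lborel)) (orthant k)
           (\<lambda>y. \<Sum>i\<in>S. c i * (\<Prod>m\<in>{1..k}. g i m (y m)))"
    and "(LINT y:orthant k|PiM {1..k} (\<lambda>_. lborel). \<Sum>i\<in>S. c i * (\<Prod>m\<in>{1..k}. g i m (y m)))
           = (\<Sum>i\<in>S. c i * (\<Prod>m\<in>{1..k}. LINT z:{0..}|lborel. g i m z))"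
proof -
  let ?P = "\<lambda>i y. indicator (orthant k) y *\<^sub>R (\<Prod>m\<in>{1..k}. g i m (y m))"
  have P: "integrable (PiM {1..k} (\<lambda>_. lborel)) (?P i)" if "i \<in> S" for i
    using set_integral_orthant_prod(1)[of k "g i"] g[OF that] unfolding set_integrable_def by blast
  have eq: "indicator (orthant k) y *\<^sub>R (\<Sum>i\<in>S. c i * (\<Prod>m\<in>{1..k}. g i m (y m)))
      = (\<Sum>i\<in>S. c i * ?P i y)" for y
    by (simp add: sum_distrib_left mult_ac)
  show "set_integrable (PiM {1..k} (\<lambda>_. lborel)) (orthant k)
      (\<lambda>y. \<Sum>i\<in>S. c i * (\<Prod>m\<in>{1..k}. g i m (y m)))"
    unfolding set_integrable_def eq using P
    by (intro Bochner_Integration.integrable_sum Bochner_Integration.integrable_mult_right) auto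
  show "(LINT y:orthant k|PiM {1..k} (\<lambda>_. lborel). \<Sum>i\<in>S. c i * (\<Prod>m\<in>{1..k}. g i m (y m)))
      = (\<Sum>i\<in>S. c i * (\<Prod>m\<in>{1..k}. LINT z:{0..}|lborel. g i m z))"
    unfolding set_lebesgue_integral_def eq using P set_integral_orthant_prod(2)[of k "g _"] g
    by (simp add: Bochner_Integration.integral_sum Bochner_Integration.integrable_mult_right
        set_lebesgue_integral_def)
qed

lemma finite_idx: "finite (idx L d)"
  unfolding idx_def by (simp add: finite_PiE)

lemma idx_range: "i \<in> idx L d \<Longrightarrow> m \<in> {1..d} \<Longrightarrow> i m \<in> {1..L}"
  unfolding idx_def by (auto simp: PiE_iff)

lemma mix_glue:
  assumes "k \<le> M"
  shows "mix L M g p (glue k y x)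
    = (\<Sum>i\<in>idx L M. p i * (\<Prod>m\<in>{k+1..M}. g (i m) (x m)) * (\<Prod>m\<in>{1..k}. g (i m) (y m)))"
proof -
  have split: "{1..M} = {1..k} \<union> {k+1..M}" using assms by auto
  have "(\<Prod>m\<in>{1..M}. g (i m) (glue k y x m))
      = (\<Prod>m\<in>{1..k}. g (i m) (y m)) * (\<Prod>m\<in>{k+1..M}. g (i m) (x m))" for i
    unfolding split
    by (subst prod.union_disjoint) (auto simp: glue_def intro!: arg_cong2[where f = "(*)"] prod.cong)
  then show ?thesis
    unfolding mix_def by (simp add: mult_ac)
qed

lemma marg_mix:
  assumes "k \<le> M"
    and g: "\<And>j. j \<in> {1..L} \<Longrightarrow> set_integrable lborel {0..} (g j)"
    and g1: "\<And>j. j \<in> {1..L} \<Longrightarrow> (LINT z:{0..}|lborel. g j z) = 1"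
  shows "marg k (mix L M g p) x = (\<Sum>i\<in>idx L M. p i * (\<Prod>m\<in>{k+1..M}. g (i m) (x m)))"
proof -
  have im: "i m \<in> {1..L}" if "i \<in> idx L M" "m \<in> {1..k}" for i m
    using idx_range[OF that(1)] that(2) assms(1) by auto
  show ?thesis
    unfolding marg_def mix_glue[OF assms(1)]
    using set_integral_orthant_sum_prod(2)[OF finite_idx, where g = "\<lambda>i m. g (i m)" and k = k] g g1 im
    by simp
qed

lemma mix_glue_nonneg:
  assumes p: "MMEam_weights L M g p" and "k \<le> M" and y: "y \<in> orthant k"
    and x: "\<And>m. m \<in> {k+1..M} \<Longrightarrow> x m \<ge> 0"
  shows "mix L M g p (glue k y x) \<ge> 0"
proof -
  let ?z = "restrict (glue k y x) {1..M}"
  have "?z \<in> orthant M"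
    using y x by (auto simp: orthant_def glue_def PiE_iff)
  moreover have "mix L M g p ?z = mix L M g p (glue k y x)"
    unfolding mix_def by (intro sum.cong prod.cong) auto
  ultimately show ?thesis
    using p unfolding MMEam_weights_def by metis
qed

text \<open>Weights on \<open>{1..L}\<^sup>M\<close> that only multiply the first \<open>k\<close> factors are pushed forward to
  \<open>{1..L}\<^sup>k\<close> along restriction.\<close>
lemma is_MMEam_restrict_weights:
  assumes "k \<le> M" and c: "(\<Sum>i\<in>idx L M. c i) = 1"
    and h: "\<And>y. y \<in> orthant k \<Longrightarrow> h y = (\<Sum>i\<in>idx L M. c i * (\<Prod>m\<in>{1..k}. g (i m) (y m)))"
    and nonneg: "\<And>y. y \<in> orthant k \<Longrightarrow> h y \<ge> 0"
  shows "is_MMEam L k g h"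
proof -
  define c' where "c' j = (\<Sum>i\<in>{i\<in>idx L M. restrict i {1..k} = j}. c i)" for j
  have group: "(\<Sum>j\<in>idx L k. \<Sum>i\<in>{i\<in>idx L M. restrict i {1..k} = j}. F i) = (\<Sum>i\<in>idx L M. F i)"
    for F :: "(nat \<Rightarrow> nat) \<Rightarrow> real"
    using assms(1) by (intro sum.group finite_idx) (auto simp: idx_def PiE_iff)
  have mix: "mix L k g c' y = (\<Sum>i\<in>idx L M. c i * (\<Prod>m\<in>{1..k}. g (i m) (y m)))" for y
  proof -
    have "mix L k g c' y
        = (\<Sum>j\<in>idx L k. \<Sum>i\<in>{i\<in>idx L M. restrict i {1..k} = j}. c i * (\<Prod>m\<in>{1..k}. g (j m) (y m)))"
      unfolding mix_def c'_def by (simp add: sum_distrib_right)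
    also have "\<dots> = (\<Sum>j\<in>idx L k. \<Sum>i\<in>{i\<in>idx L M. restrict i {1..k} = j}.
        c i * (\<Prod>m\<in>{1..k}. g (i m) (y m)))"
      by (intro sum.cong prod.cong refl arg_cong2[where f = "(*)"]) auto
    finally show ?thesis unfolding group .
  qed
  have "MMEam_weights L k g c'"
    unfolding MMEam_weights_def c'_def group using c nonneg h mix[unfolded c'_def] by simp
  then show ?thesis
    unfolding is_MMEam_def using h mix by metis
qed

lemma fcon_mix:
  assumes "k \<le> M"
    and g: "\<And>j. j \<in> {1..L} \<Longrightarrow> set_integrable lborel {0..} (g j)"
    and g1: "\<And>j. j \<in> {1..L} \<Longrightarrow> (LINT z:{0..}|lborel. g j z) = 1"
  shows "fcon k (mix L M g p) x y = (\<Sum>i\<in>idx L M.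
    p i * (\<Prod>m\<in>{k+1..M}. g (i m) (x m)) / (\<Sum>h\<in>idx L M. p h * (\<Prod>m\<in>{k+1..M}. g (h m) (x m)))
      * (\<Prod>m\<in>{1..k}. g (i m) (y m)))"
proof -
  have "marg k (mix L M g p) x = (\<Sum>h\<in>idx L M. p h * (\<Prod>m\<in>{k+1..M}. g (h m) (x m)))"
    by (rule marg_mix) (fact assms)+
  then show ?thesis
    unfolding fcon_def mix_glue[OF assms(1)] by (simp add: sum_divide_distrib)
qed

lemma set_integral_orthant_moment_ME_mix:
  assumes ME: "\<And>j. j \<in> {1..L} \<Longrightarrow> ME_triple (\<alpha> j) (T j) (t j)" and "k \<le> M"
  shows "set_integrable (PiM {1..k} (\<lambda>_. lborel)) (orthant k) (\<lambda>y. (\<Prod>j\<in>{1..k}. y j ^ r j) *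
           (\<Sum>i\<in>idx L M. c i * (\<Prod>j\<in>{1..k}. ME_fun (\<alpha> (i j)) (T (i j)) (t (i j)) (y j))))"
    and "(LINT y:orthant k|PiM {1..k} (\<lambda>_. lborel). (\<Prod>j\<in>{1..k}. y j ^ r j) *
           (\<Sum>i\<in>idx L M. c i * (\<Prod>j\<in>{1..k}. ME_fun (\<alpha> (i j)) (T (i j)) (t (i j)) (y j))))
         = (\<Sum>i\<in>idx L M. c i * (\<Prod>j\<in>{1..k}.
             fact (r j) * (\<alpha> (i j) \<bullet> (the (mat_inverse (- T (i j))) ^\<^sub>m (r j + 1) *\<^sub>v t (i j)))))"
proof -
  let ?g = "\<lambda>i j z. z ^ r j * ME_fun (\<alpha> (i j)) (T (i j)) (t (i j)) z"
  have ME_ij: "ME_triple (\<alpha> (i j)) (T (i j)) (t (i j))" if "i \<in> idx L M" "j \<in> {1..k}" for i j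
    using ME idx_range[OF that(1)] that(2) assms(2) by auto
  have "(\<lambda>y. (\<Prod>j\<in>{1..k}. y j ^ r j) *
           (\<Sum>i\<in>idx L M. c i * (\<Prod>j\<in>{1..k}. ME_fun (\<alpha> (i j)) (T (i j)) (t (i j)) (y j))))
      = (\<lambda>y. \<Sum>i\<in>idx L M. c i * (\<Prod>j\<in>{1..k}. ?g i j (y j)))"
    by (simp add: sum_distrib_left prod.distrib mult_ac)
  moreover note integral = set_integral_orthant_sum_prod[OF finite_idx, of L M k ?g c]
  ultimately show "set_integrable (PiM {1..k} (\<lambda>_. lborel)) (orthant k) (\<lambda>y. (\<Prod>j\<in>{1..k}. y j ^ r j) *
           (\<Sum>i\<in>idx L M. c i * (\<Prod>j\<in>{1..k}. ME_fun (\<alpha> (i j)) (T (i j)) (t (i j)) (y j))))"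
    and "(LINT y:orthant k|PiM {1..k} (\<lambda>_. lborel). (\<Prod>j\<in>{1..k}. y j ^ r j) *
           (\<Sum>i\<in>idx L M. c i * (\<Prod>j\<in>{1..k}. ME_fun (\<alpha> (i j)) (T (i j)) (t (i j)) (y j))))
         = (\<Sum>i\<in>idx L M. c i * (\<Prod>j\<in>{1..k}.
             fact (r j) * (\<alpha> (i j) \<bullet> (the (mat_inverse (- T (i j))) ^\<^sub>m (r j + 1) *\<^sub>v t (i j)))))"
    using ME_triple_moment[OF ME_ij] by (auto intro!: sum.cong prod.cong)
qed

theorem theorem1:
  fixes L M k :: nat
    and \<alpha> :: "nat \<Rightarrow> real vec" and T :: "nat \<Rightarrow> real mat" and t :: "nat \<Rightarrow> real vec"
    and p :: "(nat \<Rightarrow> nat) \<Rightarrow> real"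
    and x :: "nat \<Rightarrow> real"
  defines "fs \<equiv> \<lambda>j. ME_fun (\<alpha> j) (T j) (t j)"
  defines "f \<equiv> mix L M fs p"
  defines "q \<equiv> \<lambda>i. if k < M
              then p i * (\<Prod>m\<in>{k+1..M}. fs (i m) (x m)) /
                   (\<Sum>h\<in>idx L M. p h * (\<Prod>m\<in>{k+1..M}. fs (h m) (x m)))
              else p i"
  assumes "L \<ge> 1" and "M \<ge> 1"
    and ME: "\<And>j. j \<in> {1..L} \<Longrightarrow> ME_triple (\<alpha> j) (T j) (t j)"
    and dens: "MMEam_weights L M fs p"
    and k: "1 \<le> k" "k \<le> M"
    and xnn: "\<And>m. m \<in> {k+1..M} \<Longrightarrow> x m \<ge> 0"
    and defined: "marg k f x > 0"
  shows "(\<forall>y\<in>orthant k. fcon k f x y =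
            (\<Sum>i\<in>idx L M. q i * (\<Prod>j\<in>{1..k}. fs (i j) (y j))))
       \<and> is_MMEam L k fs (fcon k f x)
       \<and> (\<forall>r :: nat \<Rightarrow> nat.
            set_integrable (PiM {1..k} (\<lambda>_. lborel)) (orthant k)
              (\<lambda>y. (\<Prod>j\<in>{1..k}. y j ^ r j) * fcon k f x y)
          \<and> (LINT y:orthant k|PiM {1..k} (\<lambda>_. lborel).
                (\<Prod>j\<in>{1..k}. y j ^ r j) * fcon k f x y)
            = (\<Sum>i\<in>idx L M. q i * (\<Prod>j\<in>{1..k}.
                 fact (r j) * (\<alpha> (i j) \<bullet> ((the (mat_inverse (- T (i j))) ^\<^sub>m (r j + 1)) *\<^sub>v t (i j))))))"
proof -
  have density: "set_integrable lborel {0..} (fs j)" "(LINT z:{0..}|lborel. fs j z) = 1"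
    if "j \<in> {1..L}" for j
    using ME[OF that] unfolding ME_triple_def fs_def by auto
  have fcon: "fcon k f x y = (\<Sum>i\<in>idx L M. q i * (\<Prod>j\<in>{1..k}. fs (i j) (y j)))" for y
    using fcon_mix[OF k(2) density] dens k unfolding f_def q_def MMEam_weights_def
    by (cases "k < M") simp_all
  have "marg k f x = (\<Sum>h\<in>idx L M. p h * (\<Prod>m\<in>{k+1..M}. fs (h m) (x m)))"
    unfolding f_def by (rule marg_mix[OF k(2)]) (fact density)+
  then have "(\<Sum>i\<in>idx L M. q i) = 1"
    using defined dens unfolding q_def MMEam_weights_def
    by (cases "k < M") (simp_all add: sum_divide_distrib[symmetric])
  moreover have "fcon k f x y \<ge> 0" if "y \<in> orthant k" for y
    unfolding fcon_def f_def using mix_glue_nonneg[OF dens k(2) that xnn] defined f_def by simp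
  ultimately have "is_MMEam L k fs (fcon k f x)"
    by (rule is_MMEam_restrict_weights[OF k(2) _ fcon])
  then show ?thesis
    using fcon set_integral_orthant_moment_ME_mix[where \<alpha> = \<alpha> and T = T and t = t, OF ME k(2)]
    unfolding fs_def by simp
qed

end
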